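(* Fix $\ell, \tilde\ell \in \mathbb{R}_{>0}$ and $\delta \in \mathbb{R}$. The map $f \mapsto C(f)$ is one-to-one when restricted to the set of barcodes \[ \Big\{ f = x^{\tilde\alpha}y^{\tilde\ell} + \sum_{i=1}^n x^{\alpha_i}y^{\ell} \ :\ n\ge 0,\ \tilde\alpha,\alpha_i\in\mathbb{R},\ \Delta(f) = \delta \Big\}. \]
   Context: A barcode is a finite formal sum $f = \sum_{j} x^{a_j}y^{l_j}$ with $a_j \in \mathbb{R}$, $l_j \in \mathbb{R}_{>0}$ (a finite multiset of bars). Its critical series is $C(f) = \sum_j x^{a_j} - \sum_j x^{a_j+l_j}$ (a finite integer combination of symbols $x^g$, $g\in\mathbb{R}$), and its drift is $\Delta(f) = \sum_j a_j$, the sum of the birth grades of all bars. *)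

theory Defs
  imports Complex_Main "HOL-Library.Multiset"
begin

text \<open>A barcode is a finite multiset of bars (a, l), standing for the monomial x^a y^l,
  with birth grade a and length l > 0.\<close>
type_synonym barcode = "(real \<times> real) multiset"

definition is_barcode :: "barcode \<Rightarrow> bool" where
  "is_barcode f \<longleftrightarrow> (\<forall>b \<in># f. snd b > 0)"

text \<open>Critical series C(f) = sum_j x^(a_j) - sum_j x^(a_j + l_j), represented by its
  coefficient function g \<mapsto> (coefficient of x^g), which is finitely supported.\<close>
definition crit :: "barcode \<Rightarrow> real \<Rightarrow> int" where
  "crit f g = int (size (filter_mset (\<lambda>b. fst b = g) f))
            - int (size (filter_mset (\<lambda>b. fst b + snd b = g) f))"

definition drift :: "barcode \<Rightarrow> real" where
  "drift f = sum_mset (image_mset fst f)"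

definition barcode_family :: "real \<Rightarrow> real \<Rightarrow> real \<Rightarrow> barcode set" where
  "barcode_family l lt \<delta> =
     {f. \<exists>a0 (alphas :: real list). f = add_mset (a0, lt) (mset (map (\<lambda>a. (a, l)) alphas))
                              \<and> drift f = \<delta>}"

end

theory Submission
  imports Defs
begin

text \<open>Pairing C(f) with x \<mapsto> w x gives the moment \<Sum>(w a - w (a + l)) over the bars of f,
  so every such moment is an invariant of C(f). With w x = x the moment counts bars (weighted
  by length), and with w x = x^2 it sees the drift; for two barcodes of the family with the
  same drift they give (lt - l)(a - b) = 0, a and b being the births of the long bars.
  A barcode whose bars all have the same length l is then recovered from
  C(f) = c - c(\<cdot> - l), c being the birth count: the difference of two birth counts with the
  same critical series is l-periodic and finitely supported, hence zero.\<close>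

lemma crit_add_mset:
  "crit (add_mset b f) g
     = crit f g + (if fst b = g then 1 else 0) - (if fst b + snd b = g then 1 else 0)"
  by (simp add: crit_def)

lemma crit_add_mset_cancel:
  assumes "crit (add_mset b f) = crit (add_mset b f')"
  shows "crit f = crit f'"
proof
  fix g show "crit f g = crit f' g"
    using fun_cong[OF assms, of g] by (simp add: crit_add_mset)
qed

definition crit_moment :: "(real \<Rightarrow> real) \<Rightarrow> barcode \<Rightarrow> real" where
  "crit_moment w f = (\<Sum>b\<in>#f. w (fst b) - w (fst b + snd b))"

lemma crit_moment_add_mset [simp]:
  "crit_moment w (add_mset b f) = w (fst b) - w (fst b + snd b) + crit_moment w f"
  by (simp add: crit_moment_def)

lemma sum_crit_eq_crit_moment:
  assumes "finite S" and "\<forall>b\<in>#f. fst b \<in> S \<and> fst b + snd b \<in> S"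
  shows "(\<Sum>g\<in>S. of_int (crit f g) * w g) = crit_moment w f"
  using assms(2)
proof (induction f)
  case empty
  then show ?case by (simp add: crit_def crit_moment_def)
next
  case (add b f)
  have "(\<Sum>g\<in>S. of_int (crit (add_mset b f) g) * w g)
      = (\<Sum>g\<in>S. of_int (crit f g) * w g + (if fst b = g then w g else 0)
                                        - (if fst b + snd b = g then w g else 0))"
    by (rule sum.cong) (auto simp: crit_add_mset algebra_simps)
  also have "\<dots> = (\<Sum>g\<in>S. of_int (crit f g) * w g) + w (fst b) - w (fst b + snd b)"
    using add.prems assms(1) by (simp add: sum.distrib sum_subtractf)
  finally show ?case using add by simp
qed

lemma crit_moment_eq:
  assumes "crit f = crit f'"
  shows "crit_moment w f = crit_moment w f'"
proof -
  define S where "S = (\<lambda>b. fst b) ` set_mset (f + f') \<union> (\<lambda>b. fst b + snd b) ` set_mset (f + f')"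
  have S: "finite S" by (simp add: S_def)
  have "crit_moment w f = (\<Sum>g\<in>S. of_int (crit f g) * w g)"
    by (rule sum_crit_eq_crit_moment[symmetric]) (auto simp: S S_def)
  also have "\<dots> = crit_moment w f'"
    unfolding assms by (rule sum_crit_eq_crit_moment) (auto simp: S S_def)
  finally show ?thesis .
qed

lemma drift_add_mset [simp]: "drift (add_mset b f) = fst b + drift f"
  by (simp add: drift_def)

lemma crit_moment_id_uniform:
  "\<forall>b\<in>#C. snd b = l \<Longrightarrow> crit_moment (\<lambda>x. x) C = - real (size C) * l"
  by (induction C) (auto simp: crit_moment_def algebra_simps)

lemma crit_moment_square_uniform:
  "\<forall>b\<in>#C. snd b = l \<Longrightarrow> crit_moment (\<lambda>x. x\<^sup>2) C = - 2 * l * drift C - real (size C) * l\<^sup>2"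
  by (induction C) (auto simp: crit_moment_def drift_def algebra_simps power2_eq_square)

lemma crit_uniform:
  assumes "\<forall>b\<in>#A. snd b = l"
  shows "crit A g = int (count (image_mset fst A) g) - int (count (image_mset fst A) (g - l))"
  using assms by (induction A) (auto simp: crit_def)

lemma periodic_finite_support_eq_0:
  fixes h :: "'a::field_char_0 \<Rightarrow> 'b::zero"
  assumes "finite {x. h x \<noteq> 0}" and "p \<noteq> 0" and "\<And>x. h (x + p) = h x"
  shows "h x = 0"
proof (rule ccontr)
  assume "h x \<noteq> 0"
  have "h (x + of_nat n * p) = h x" for n
  proof (induction n)
    case (Suc n)
    have "x + of_nat (Suc n) * p = (x + of_nat n * p) + p"
      by (simp add: algebra_simps)
    then show ?case using Suc assms(3) [of "x + of_nat n * p"] by metis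
  qed simp
  then have "range (\<lambda>n. x + of_nat n * p) \<subseteq> {x. h x \<noteq> 0}"
    using \<open>h x \<noteq> 0\<close> by auto
  moreover have "inj (\<lambda>n::nat. x + of_nat n * p)"
    using assms(2) by (auto intro: injI)
  ultimately show False
    using assms(1) finite_subset finite_imageD infinite_UNIV_nat by blast
qed

lemma uniform_barcode_eqI:
  assumes "l \<noteq> 0" and A: "\<forall>b\<in>#A. snd b = l" and B: "\<forall>b\<in>#B. snd b = l"
    and "crit A = crit B"
  shows "A = B"
proof -
  define h where "h g = int (count (image_mset fst A) g) - int (count (image_mset fst B) g)" for g
  have "finite {g. h g \<noteq> 0}"
    by (rule finite_subset[of _ "set_mset (image_mset fst A + image_mset fst B)"])
       (auto simp: h_def, metis count_eq_zero_iff set_image_mset)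
  moreover have "h (g + l) = h g" for g
    using crit_uniform[OF A, of "g + l"] crit_uniform[OF B, of "g + l"] \<open>crit A = crit B\<close>
    by (simp add: h_def)
  ultimately have "h g = 0" for g
    using periodic_finite_support_eq_0 \<open>l \<noteq> 0\<close> by metis
  then have births: "image_mset fst A = image_mset fst B"
    by (intro multiset_eqI) (simp add: h_def)
  have "image_mset (\<lambda>a. (a, l)) (image_mset fst C) = image_mset id C" if "\<forall>b\<in>#C. snd b = l" for C
    unfolding multiset.map_comp comp_def using that by (intro image_mset_cong) auto
  then show ?thesis using A B births by (metis multiset.map_id)
qed

lemma crit_drift_eq_long_bar_birth:
  assumes "l \<noteq> 0" and C: "\<forall>c\<in>#C. snd c = l" and D: "\<forall>c\<in>#D. snd c = l"
    and crit: "crit (add_mset (a, lt) C) = crit (add_mset (b, lt) D)"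
    and drift: "drift (add_mset (a, lt) C) = drift (add_mset (b, lt) D)"
  shows "lt = l \<or> a = b"
proof -
  have "crit_moment (\<lambda>x. x) (add_mset (a, lt) C) = crit_moment (\<lambda>x. x) (add_mset (b, lt) D)"
    using crit by (rule crit_moment_eq)
  then have size: "size C = size D"
    using \<open>l \<noteq> 0\<close> by (simp add: crit_moment_id_uniform [OF C] crit_moment_id_uniform [OF D])
  have "crit_moment (\<lambda>x. x\<^sup>2) (add_mset (a, lt) C) = crit_moment (\<lambda>x. x\<^sup>2) (add_mset (b, lt) D)"
    using crit by (rule crit_moment_eq)
  then have "a\<^sup>2 - (a + lt)\<^sup>2 - 2 * l * (drift C) = b\<^sup>2 - (b + lt)\<^sup>2 - 2 * l * (drift D)"
    by (simp add: crit_moment_square_uniform [OF C] crit_moment_square_uniform [OF D] size)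
  moreover have "drift C = drift D + b - a"
    using drift by simp
  ultimately have "(lt - l) * (a - b) = 0"
    by (simp add: algebra_simps power2_eq_square)
  then show ?thesis by simp
qed

theorem proposition12:
  fixes l lt \<delta> :: real
  assumes "l > 0" and "lt > 0"
  shows "inj_on crit (barcode_family l lt \<delta>)"
proof (rule inj_onI)
  fix f g
  assume "f \<in> barcode_family l lt \<delta>" "g \<in> barcode_family l lt \<delta>" and crit: "crit f = crit g"
  then obtain a xs b ys
    where f: "f = add_mset (a, lt) (mset (map (\<lambda>a. (a, l)) xs))"
      and g: "g = add_mset (b, lt) (mset (map (\<lambda>a. (a, l)) ys))"
      and drift: "drift f = drift g"
    unfolding barcode_family_def by auto
  have "lt = l \<or> a = b"
    using crit drift unfolding f g
    by (intro crit_drift_eq_long_bar_birth [of l]) (use assms in auto)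
  then show "f = g"
  proof
    assume "lt = l"
    then show ?thesis
      using uniform_barcode_eqI [of l f g] assms(1) crit unfolding f g by auto
  next
    assume "a = b"
    then have "crit (mset (map (\<lambda>a. (a, l)) xs)) = crit (mset (map (\<lambda>a. (a, l)) ys))"
      using crit unfolding f g by (rule_tac crit_add_mset_cancel) simp
    then show ?thesis
      using uniform_barcode_eqI [of l] assms(1) \<open>a = b\<close> unfolding f g by auto
  qed
qed

end
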